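(* Fix a set $\mathfrak{p}$ of points. (a) If $(\mathfrak{p},\mathfrak{L})$ is a linear space, then the cograph $\mathcal{C}$ on $\mathfrak{p}$ defined by letting $\mathcal{C}(P,Q)$ be the unique line of $\mathfrak{L}$ containing $P$ and $Q$ is a PL-cograph. (b) If $\mathcal{C}$ is a PL-cograph on $\mathfrak{p}$, then letting, for each pair of distinct points $P,Q$, the line through $P$ and $Q$ be the set of all endpoints of all pairs $\{R,S\}$ with $\mathcal{C}(R,S)=\mathcal{C}(P,Q)$, yields a well-defined linear space on $\mathfrak{p}$. (c) These two constructions are mutually inverse (PL-cographs being considered up to renaming of edge values), so linear spaces on $\mathfrak{p}$ and PL-cographs on $\mathfrak{p}$ are in one-to-one correspondence.
   Context: A cograph is a function $\mathcal{C}$ assigning to each unordered pair $\{P,Q\}$ of distinct elements of a set of points a value $\mathcal{C}(P,Q)$ (an edge). A PL-cograph is a cograph satisfying: (1) for distinct points $P,Q,R$, if $\mathcal{C}(P,Q)=\mathcal{C}(Q,R)$ then $\mathcal{C}(P,Q)=\mathcal{C}(P,R)$; (2) for distinct points $P,Q,R,S$, if $\mathcal{C}(P,Q)=\mathcal{C}(R,S)$ then $\mathcal{C}(P,Q)=\mathcal{C}(P,R)=\mathcal{C}(P,S)=\mathcal{C}(Q,R)=\mathcal{C}(Q,S)$. A linear space $(\mathfrak{p},\mathfrak{L})$ consists of a set $\mathfrak{p}$ of points and a set $\mathfrak{L}$ of lines, each line a subset of $\mathfrak{p}$, such that any two distinct points belong to exactly one line and every line has at least two points. *)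

theory Defs
  imports Main
begin

text \<open>Unordered pairs of distinct points of p; a cograph on p is a function
  from such pairs to edge values, modelled as a function on 2-element sets.\<close>
definition edges :: "'a set \<Rightarrow> 'a set set" where
  "edges p = {{P, Q} | P Q. P \<in> p \<and> Q \<in> p \<and> P \<noteq> Q}"

definition PL_cograph :: "'a set \<Rightarrow> ('a set \<Rightarrow> 'b) \<Rightarrow> bool" where
  "PL_cograph p C \<longleftrightarrow>
     (\<forall>P\<in>p. \<forall>Q\<in>p. \<forall>R\<in>p. P \<noteq> Q \<and> P \<noteq> R \<and> Q \<noteq> R \<longrightarrow>
        C {P, Q} = C {Q, R} \<longrightarrow> C {P, Q} = C {P, R}) \<and>
     (\<forall>P\<in>p. \<forall>Q\<in>p. \<forall>R\<in>p. \<forall>S\<in>p.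
        P \<noteq> Q \<and> P \<noteq> R \<and> P \<noteq> S \<and> Q \<noteq> R \<and> Q \<noteq> S \<and> R \<noteq> S \<longrightarrow>
        C {P, Q} = C {R, S} \<longrightarrow>
        C {P, Q} = C {P, R} \<and> C {P, Q} = C {P, S} \<and>
        C {P, Q} = C {Q, R} \<and> C {P, Q} = C {Q, S})"

definition linear_space :: "'a set \<Rightarrow> 'a set set \<Rightarrow> bool" where
  "linear_space p L \<longleftrightarrow>
     (\<forall>l\<in>L. l \<subseteq> p \<and> (\<exists>P Q. P \<in> l \<and> Q \<in> l \<and> P \<noteq> Q)) \<and>
     (\<forall>P\<in>p. \<forall>Q\<in>p. P \<noteq> Q \<longrightarrow> (\<exists>!l. l \<in> L \<and> P \<in> l \<and> Q \<in> l))"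

definition line_cograph :: "'a set set \<Rightarrow> 'a set \<Rightarrow> 'a set" where
  "line_cograph L e = (THE l. l \<in> L \<and> e \<subseteq> l)"

definition cograph_line :: "'a set \<Rightarrow> ('a set \<Rightarrow> 'b) \<Rightarrow> 'a \<Rightarrow> 'a \<Rightarrow> 'a set" where
  "cograph_line p C P Q =
     {X. \<exists>R\<in>p. \<exists>S\<in>p. R \<noteq> S \<and> C {R, S} = C {P, Q} \<and> (X = R \<or> X = S)}"

definition lines_of :: "'a set \<Rightarrow> ('a set \<Rightarrow> 'b) \<Rightarrow> 'a set set" where
  "lines_of p C = {cograph_line p C P Q | P Q. P \<in> p \<and> Q \<in> p \<and> P \<noteq> Q}"

end

theory Submission
  imports Defs
begin

text \<open>In a PL-cograph the endpoints of all edges with a common value \<open>c\<close> are pairwise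
  joined by edges of value \<open>c\<close>: the two axioms cover the cases of edges sharing an endpoint
  and of disjoint edges. Hence the lines of (b) are exactly these cliques of constant value, two
  distinct points lie on the line of the value of their edge and on no other, and a line
  determines the value of its edges; this gives (b) and the renaming in (c). Conversely, in a
  linear space, \<open>{P, Q}\<close> is mapped to the line \<open>l\<close> exactly when \<open>P, Q \<in> l\<close>, which gives (a)
  and the remaining half of (c).\<close>

lemma mem_cograph_line_iff:
  "X \<in> cograph_line p C A B \<longleftrightarrow> X \<in> p \<and> (\<exists>S\<in>p. S \<noteq> X \<and> C {X, S} = C {A, B})"
  unfolding cograph_line_def by (auto simp: insert_commute)

lemma cograph_line_subset: "cograph_line p C A B \<subseteq> p"
  unfolding cograph_line_def by blast

lemma endpoints_mem_cograph_line:
  "P \<in> p \<Longrightarrow> Q \<in> p \<Longrightarrow> P \<noteq> Q \<Longrightarrow> P \<in> cograph_line p C P Q \<and> Q \<in> cograph_line p C P Q"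
  unfolding cograph_line_def by blast

lemma cograph_line_cong:
  "C {A, B} = C {P, Q} \<Longrightarrow> cograph_line p C A B = cograph_line p C P Q"
  unfolding cograph_line_def by simp

lemma linear_space_line_subset:
  "linear_space p L \<Longrightarrow> l \<in> L \<Longrightarrow> l \<subseteq> p"
  unfolding linear_space_def by blast

lemma linear_space_line_two_points:
  assumes "linear_space p L" "l \<in> L"
  obtains P Q where "P \<in> l" "Q \<in> l" "P \<noteq> Q"
  using assms unfolding linear_space_def by (meson conjunct1 bspec)

lemma linear_space_ex1_line:
  assumes "linear_space p L" "P \<in> p" "Q \<in> p" "P \<noteq> Q"
  shows "\<exists>!l. l \<in> L \<and> P \<in> l \<and> Q \<in> l"
  using assms unfolding linear_space_def by simp

lemma linear_space_obtain_line:
  assumes "linear_space p L" "P \<in> p" "Q \<in> p" "P \<noteq> Q"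
  obtains l where "l \<in> L" "P \<in> l" "Q \<in> l"
  using linear_space_ex1_line[OF assms] by blast

lemma line_cograph_eq:
  assumes ls: "linear_space p L" and l: "l \<in> L" "P \<in> l" "Q \<in> l" and "P \<noteq> Q"
  shows "line_cograph L {P, Q} = l"
  unfolding line_cograph_def
proof (rule the_equality)
  show "l \<in> L \<and> {P, Q} \<subseteq> l" using l by blast
next
  fix l' assume l': "l' \<in> L \<and> {P, Q} \<subseteq> l'"
  have "P \<in> p" "Q \<in> p" using linear_space_line_subset[OF ls l(1)] l by auto
  from linear_space_ex1_line[OF ls this \<open>P \<noteq> Q\<close>] l l' show "l' = l" by auto
qed

lemma line_cograph_eq_iff:
  assumes ls: "linear_space p L" and PQ: "P \<in> p" "Q \<in> p" "P \<noteq> Q" and "l \<in> L"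
  shows "line_cograph L {P, Q} = l \<longleftrightarrow> P \<in> l \<and> Q \<in> l"
proof
  obtain l' where l': "l' \<in> L" "P \<in> l'" "Q \<in> l'"
    using linear_space_obtain_line[OF ls PQ] .
  moreover assume "line_cograph L {P, Q} = l"
  ultimately show "P \<in> l \<and> Q \<in> l"
    using line_cograph_eq[OF ls l' PQ(3)] by simp
next
  assume "P \<in> l \<and> Q \<in> l"
  then show "line_cograph L {P, Q} = l"
    using line_cograph_eq[OF ls \<open>l \<in> L\<close> _ _ PQ(3)] by simp
qed

theorem PL_cograph_line_cograph:
  assumes ls: "linear_space p L"
  shows "PL_cograph p (line_cograph L)"
  unfolding PL_cograph_def
proof (intro conjI[OF ballI ballI] ballI impI)
  fix P Q R assume pts: "P \<in> p" "Q \<in> p" "R \<in> p" and dist: "P \<noteq> Q \<and> P \<noteq> R \<and> Q \<noteq> R"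
    and eq: "line_cograph L {P, Q} = line_cograph L {Q, R}"
  obtain l where l: "l \<in> L" "P \<in> l" "Q \<in> l"
    using linear_space_obtain_line[OF ls pts(1,2)] dist by blast
  then have PQ: "line_cograph L {P, Q} = l"
    using line_cograph_eq[OF ls] dist by blast
  then have "R \<in> l"
    using eq line_cograph_eq_iff[OF ls pts(2,3) _ l(1)] dist by simp
  then show "line_cograph L {P, Q} = line_cograph L {P, R}"
    using PQ line_cograph_eq[OF ls l(1,2)] dist by simp
next
  fix P Q R S assume pts: "P \<in> p" "Q \<in> p" "R \<in> p" "S \<in> p"
    and dist: "P \<noteq> Q \<and> P \<noteq> R \<and> P \<noteq> S \<and> Q \<noteq> R \<and> Q \<noteq> S \<and> R \<noteq> S"
    and eq: "line_cograph L {P, Q} = line_cograph L {R, S}"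
  obtain l where l: "l \<in> L" "P \<in> l" "Q \<in> l"
    using linear_space_obtain_line[OF ls pts(1,2)] dist by blast
  then have PQ: "line_cograph L {P, Q} = l"
    using line_cograph_eq[OF ls] dist by blast
  then have "R \<in> l" "S \<in> l"
    using eq line_cograph_eq_iff[OF ls pts(3,4) _ l(1)] dist by simp_all
  then show "line_cograph L {P, Q} = line_cograph L {P, R} \<and>
        line_cograph L {P, Q} = line_cograph L {P, S} \<and>
        line_cograph L {P, Q} = line_cograph L {Q, R} \<and>
        line_cograph L {P, Q} = line_cograph L {Q, S}"
    using PQ line_cograph_eq[OF ls l(1)] l dist by simp
qed

lemma cograph_line_line_cograph:
  assumes ls: "linear_space p L" and l: "l \<in> L" "P \<in> l" "Q \<in> l" "P \<noteq> Q"
  shows "cograph_line p (line_cograph L) P Q = l"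
proof (intro equalityI subsetI)
  fix X assume "X \<in> cograph_line p (line_cograph L) P Q"
  then obtain R S where RS: "R \<in> p" "S \<in> p" "R \<noteq> S" and "line_cograph L {R, S} = l"
    and "X = R \<or> X = S"
    unfolding cograph_line_def line_cograph_eq[OF ls l] by blast
  then have "R \<in> l" "S \<in> l" using line_cograph_eq_iff[OF ls RS l(1)] by simp_all
  with \<open>X = R \<or> X = S\<close> show "X \<in> l" by blast
next
  fix X assume X: "X \<in> l"
  obtain Y where Y: "Y \<in> l" "Y \<noteq> X"
    using linear_space_line_two_points[OF ls l(1)] by metis
  have "X \<in> p" "Y \<in> p" using linear_space_line_subset[OF ls l(1)] X Y by auto
  moreover have "line_cograph L {X, Y} = l" using line_cograph_eq[OF ls l(1) X Y(1)] Y(2) by simp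
  ultimately show "X \<in> cograph_line p (line_cograph L) P Q"
    unfolding mem_cograph_line_iff line_cograph_eq[OF ls l] using Y(2) by blast
qed

theorem lines_of_line_cograph:
  assumes ls: "linear_space p L"
  shows "lines_of p (line_cograph L) = L"
proof (intro equalityI subsetI)
  fix l assume "l \<in> lines_of p (line_cograph L)"
  then obtain P Q where PQ: "P \<in> p" "Q \<in> p" "P \<noteq> Q" "l = cograph_line p (line_cograph L) P Q"
    unfolding lines_of_def by blast
  obtain l' where l': "l' \<in> L" "P \<in> l'" "Q \<in> l'"
    using linear_space_obtain_line[OF ls PQ(1-3)] .
  show "l \<in> L" using cograph_line_line_cograph[OF ls l' PQ(3)] PQ(4) l'(1) by simp
next
  fix l assume l: "l \<in> L"
  then obtain P Q where PQ: "P \<in> l" "Q \<in> l" "P \<noteq> Q"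
    using linear_space_line_two_points[OF ls] by metis
  then show "l \<in> lines_of p (line_cograph L)"
    using cograph_line_line_cograph[OF ls l PQ] linear_space_line_subset[OF ls l]
    unfolding lines_of_def by blast
qed

lemma PL_cograph_triangle:
  assumes "PL_cograph p C" "P \<in> p" "Q \<in> p" "R \<in> p" "P \<noteq> Q" "P \<noteq> R" "Q \<noteq> R"
    "C {P, Q} = C {Q, R}"
  shows "C {P, Q} = C {P, R}"
  using assms unfolding PL_cograph_def by blast

lemma PL_cograph_disjoint:
  assumes "PL_cograph p C" "P \<in> p" "Q \<in> p" "R \<in> p" "S \<in> p"
    "P \<noteq> Q" "P \<noteq> R" "P \<noteq> S" "Q \<noteq> R" "Q \<noteq> S" "R \<noteq> S"
    "C {P, Q} = C {R, S}"
  shows "C {P, Q} = C {P, R}"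
  using assms unfolding PL_cograph_def by blast

lemma PL_cograph_endpoints_edge:
  assumes pl: "PL_cograph p C" and pts: "X \<in> p" "S \<in> p" "Y \<in> p" "T \<in> p"
    and "X \<noteq> S" "Y \<noteq> T" "X \<noteq> Y" and val: "C {X, S} = c" "C {Y, T} = c"
  shows "C {X, Y} = c"
proof (cases "S = Y \<or> T = X")
  case True
  then show ?thesis using val by (auto simp: insert_commute)
next
  case False
  show ?thesis
  proof (cases "S = T")
    case True
    then have "C {X, S} = C {S, Y}" using val by (simp add: insert_commute)
    from PL_cograph_triangle[OF pl pts(1-3) \<open>X \<noteq> S\<close> \<open>X \<noteq> Y\<close> _ this] False val
    show ?thesis by auto
  next
    case False
    from val have "C {X, S} = C {Y, T}" by simp
    from PL_cograph_disjoint[OF pl pts \<open>X \<noteq> S\<close> \<open>X \<noteq> Y\<close> _ _ \<open>S \<noteq> T\<close> \<open>Y \<noteq> T\<close> this]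
      \<open>\<not> (S = Y \<or> T = X)\<close> val
    show ?thesis by auto
  qed
qed

lemma PL_cograph_cograph_line_edge:
  assumes pl: "PL_cograph p C"
    and "X \<in> cograph_line p C A B" "Y \<in> cograph_line p C A B" "X \<noteq> Y"
  shows "C {X, Y} = C {A, B}"
  using assms PL_cograph_endpoints_edge[OF pl] unfolding mem_cograph_line_iff by metis

theorem linear_space_lines_of:
  assumes pl: "PL_cograph p C"
  shows "linear_space p (lines_of p C)"
  unfolding linear_space_def
proof (intro conjI[OF ballI ballI] ballI impI)
  fix l assume "l \<in> lines_of p C"
  then obtain P Q where PQ: "P \<in> p" "Q \<in> p" "P \<noteq> Q" and l: "l = cograph_line p C P Q"
    unfolding lines_of_def by blast
  have "P \<in> l \<and> Q \<in> l" using endpoints_mem_cograph_line[OF PQ] l by simp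
  moreover have "l \<subseteq> p" using cograph_line_subset l by simp
  ultimately show "l \<subseteq> p \<and> (\<exists>P Q. P \<in> l \<and> Q \<in> l \<and> P \<noteq> Q)"
    using PQ(3) by blast
next
  fix P Q assume PQ: "P \<in> p" "Q \<in> p" "P \<noteq> Q"
  show "\<exists>!l. l \<in> lines_of p C \<and> P \<in> l \<and> Q \<in> l"
  proof (rule ex1I[of _ "cograph_line p C P Q"])
    show "cograph_line p C P Q \<in> lines_of p C \<and>
      P \<in> cograph_line p C P Q \<and> Q \<in> cograph_line p C P Q"
      using PQ endpoints_mem_cograph_line[OF PQ] unfolding lines_of_def by blast
  next
    fix l assume l: "l \<in> lines_of p C \<and> P \<in> l \<and> Q \<in> l"
    then obtain A B where AB: "l = cograph_line p C A B" unfolding lines_of_def by blast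
    with l have "C {P, Q} = C {A, B}"
      using PL_cograph_cograph_line_edge[OF pl _ _ \<open>P \<noteq> Q\<close>] by blast
    then show "l = cograph_line p C P Q" using AB cograph_line_cong by metis
  qed
qed

theorem line_cograph_lines_of_renaming:
  assumes pl: "PL_cograph p C"
  shows "\<exists>f. inj_on f (C ` edges p) \<and> (\<forall>e\<in>edges p. line_cograph (lines_of p C) e = f (C e))"
proof -
  define f where "f v = {X. \<exists>R\<in>p. \<exists>S\<in>p. R \<noteq> S \<and> C {R, S} = v \<and> (X = R \<or> X = S)}" for v
  have f_C: "f (C {P, Q}) = cograph_line p C P Q" for P Q
    unfolding f_def cograph_line_def by simp
  have "inj_on f (C ` edges p)"
  proof (rule inj_onI)
    fix v w assume "v \<in> C ` edges p" "w \<in> C ` edges p" and "f v = f w"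
    then obtain P Q A B where PQ: "P \<in> p" "Q \<in> p" "P \<noteq> Q" and v: "v = C {P, Q}"
      and w: "w = C {A, B}"
      unfolding edges_def by blast
    have "P \<in> cograph_line p C A B" "Q \<in> cograph_line p C A B"
      using endpoints_mem_cograph_line[OF PQ, of C] \<open>f v = f w\<close> f_C v w by simp_all
    then show "v = w" using PL_cograph_cograph_line_edge[OF pl _ _ PQ(3)] v w by simp
  qed
  moreover have "line_cograph (lines_of p C) e = f (C e)" if "e \<in> edges p" for e
  proof -
    obtain P Q where PQ: "P \<in> p" "Q \<in> p" "P \<noteq> Q" and e: "e = {P, Q}"
      using \<open>e \<in> edges p\<close> unfolding edges_def by blast
    have "cograph_line p C P Q \<in> lines_of p C" using PQ unfolding lines_of_def by blast
    with endpoints_mem_cograph_line[OF PQ]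
    have "line_cograph (lines_of p C) {P, Q} = cograph_line p C P Q"
      using line_cograph_eq[OF linear_space_lines_of[OF pl]] PQ(3) by blast
    then show ?thesis using e f_C by simp
  qed
  ultimately show ?thesis by blast
qed

theorem theorem5p2:
  fixes p :: "'a set"
  shows "(\<forall>L. linear_space p L \<longrightarrow> PL_cograph p (line_cograph L))
       \<and> (\<forall>C :: 'a set \<Rightarrow> 'b. PL_cograph p C \<longrightarrow> linear_space p (lines_of p C))
       \<and> (\<forall>L. linear_space p L \<longrightarrow> lines_of p (line_cograph L) = L)
       \<and> (\<forall>C :: 'a set \<Rightarrow> 'b. PL_cograph p C \<longrightarrow>
            (\<exists>f. inj_on f (C ` edges p) \<and>
                 (\<forall>e\<in>edges p. line_cograph (lines_of p C) e = f (C e))))"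
  by (intro conjI allI impI PL_cograph_line_cograph linear_space_lines_of lines_of_line_cograph
      line_cograph_lines_of_renaming)

end
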